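(* Let $(X,\rho)$ be a metric space, $f:X\to X$ continuous, $x\in X$, $\ell\in\mathbb N$, $n\ge2$ an integer and $\varepsilon>0$. Then \[ C_\ell(x,n,\varepsilon)=\frac{n-1}{n}\Big[\mathrm{RR}_\ell(x,n,\varepsilon)-(\ell-1)\Lambda_\ell(x,n,\varepsilon)\Big]+\delta^C_\ell,\qquad \frac1n\le\delta^C_\ell<\frac{2\ell}{n}. \]
   Context: Bowen metric $\rho_\ell(y,z)=\max_{0\le i<\ell}\rho(f^iy,f^iz)$; correlation sum $C_\ell(x,n,\varepsilon)=n^{-2}\#\{(i,j):0\le i,j<n,\ \rho_\ell(f^ix,f^jx)\le\varepsilon\}$. Recurrence plot $R(x,n,\varepsilon)$: $n\times n$ matrix ($0\le i,j<n$) with entry $1$ iff $\rho(f^ix,f^jx)\le\varepsilon$. A line of length $\ell$: triple $(i,j,\ell)$ with $0\le i,j\le n-\ell$, $i\ne j$, entries $(i+k,j+k)=1$ for $0\le k<\ell$, entry $(i-1,j-1)=0$ if $\min\{i,j\}>0$, entry $(i+\ell,j+\ell)=0$ if $\max\{i,j\}<n-\ell$. $N_l$ = number of lines of length exactly $l$ (boundary lines included), $\lambda_l=N_l/(n^2-n)$, $\Lambda_\ell=\sum_{l\ge\ell}\lambda_l$, $\mathrm{RR}_\ell=\sum_{l\ge\ell}l\lambda_l$. *)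

theory Defs
  imports "HOL-Analysis.Analysis"
begin

(* Bowen metric rho_l(y,z) = max_{0<=i<l} rho(f^i y, f^i z)  (meant for l >= 1) *)
definition bowen_dist :: "('a::metric_space \<Rightarrow> 'a) \<Rightarrow> nat \<Rightarrow> 'a \<Rightarrow> 'a \<Rightarrow> real" where
  "bowen_dist f l y z = (MAX i\<in>{..<l}. dist ((f ^^ i) y) ((f ^^ i) z))"

definition corr_sum :: "('a::metric_space \<Rightarrow> 'a) \<Rightarrow> nat \<Rightarrow> 'a \<Rightarrow> nat \<Rightarrow> real \<Rightarrow> real" where
  "corr_sum f l x n eps =
     real (card {(i, j). i < n \<and> j < n \<and> bowen_dist f l ((f ^^ i) x) ((f ^^ j) x) \<le> eps})
     / (real n)^2"

definition rplot :: "('a::metric_space \<Rightarrow> 'a) \<Rightarrow> 'a \<Rightarrow> nat \<Rightarrow> real \<Rightarrow> nat \<Rightarrow> nat \<Rightarrow> bool" where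
  "rplot f x n eps i j \<longleftrightarrow> i < n \<and> j < n \<and> dist ((f ^^ i) x) ((f ^^ j) x) \<le> eps"

definition is_line :: "('a::metric_space \<Rightarrow> 'a) \<Rightarrow> 'a \<Rightarrow> nat \<Rightarrow> real \<Rightarrow> nat \<Rightarrow> nat \<Rightarrow> nat \<Rightarrow> bool" where
  "is_line f x n eps i j l \<longleftrightarrow>
     l \<le> n \<and> i \<le> n - l \<and> j \<le> n - l \<and> i \<noteq> j \<and>
     (\<forall>k<l. rplot f x n eps (i + k) (j + k)) \<and>
     (min i j > 0 \<longrightarrow> \<not> rplot f x n eps (i - 1) (j - 1)) \<and>
     (max i j < n - l \<longrightarrow> \<not> rplot f x n eps (i + l) (j + l))"

definition num_lines :: "('a::metric_space \<Rightarrow> 'a) \<Rightarrow> 'a \<Rightarrow> nat \<Rightarrow> real \<Rightarrow> nat \<Rightarrow> nat" where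
  "num_lines f x n eps l = card {(i, j). is_line f x n eps i j l}"

definition line_freq :: "('a::metric_space \<Rightarrow> 'a) \<Rightarrow> 'a \<Rightarrow> nat \<Rightarrow> real \<Rightarrow> nat \<Rightarrow> real" where
  "line_freq f x n eps l = real (num_lines f x n eps l) / ((real n)^2 - real n)"

(* Lambda_l = sum_{l' >= l} lambda_{l'}  (lambda_{l'} = 0 for l' > n, so the sum is finite) *)
definition Lambda_sum :: "('a::metric_space \<Rightarrow> 'a) \<Rightarrow> 'a \<Rightarrow> nat \<Rightarrow> real \<Rightarrow> nat \<Rightarrow> real" where
  "Lambda_sum f x n eps l = (\<Sum>l'\<in>{l..n}. line_freq f x n eps l')"

definition RR_sum :: "('a::metric_space \<Rightarrow> 'a) \<Rightarrow> 'a \<Rightarrow> nat \<Rightarrow> real \<Rightarrow> nat \<Rightarrow> real" where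
  "RR_sum f x n eps l = (\<Sum>l'\<in>{l..n}. real l' * line_freq f x n eps l')"

end

theory Submission
  imports Defs
begin

text \<open>
  Split the pairs counted by the correlation sum into the diagonal (always \<open>n\<close> pairs),
  the off-diagonal pairs \<open>(i, j)\<close> with \<open>i + \<ell>, j + \<ell> \<le> n\<close>, and the remaining boundary pairs.
  For the middle group, \<open>\<rho>\<^sub>\<ell>(f\<^sup>i x, f\<^sup>j x) \<le> \<epsilon>\<close> means exactly that the recurrence plot has a
  diagonal run of length \<open>\<ell>\<close> starting at \<open>(i, j)\<close>. Every such run lies in a unique maximal line,
  and a line of length \<open>L \<ge> \<ell>\<close> contains \<open>L - \<ell> + 1\<close> runs of length \<open>\<ell>\<close>; summing gives
  \<open>(n\<^sup>2 - n)(RR\<^sub>\<ell> - (\<ell> - 1)\<Lambda>\<^sub>\<ell>)\<close>. The boundary pairs have a row or column index above \<open>n - \<ell>\<close>,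
  so there are fewer than \<open>2\<ell>n - n\<close> of them, which together with the diagonal gives the bounds on \<open>\<delta>\<close>.
\<close>

lemma bowen_dist_le_iff:
  assumes "0 < l"
  shows "bowen_dist f l y z \<le> eps \<longleftrightarrow> (\<forall>k<l. dist ((f ^^ k) y) ((f ^^ k) z) \<le> eps)"
proof -
  have "{..<l} \<noteq> {}" using assms by auto
  then show ?thesis unfolding bowen_dist_def by (auto simp: Max_le_iff)
qed

definition diag_run :: "('a::metric_space \<Rightarrow> 'a) \<Rightarrow> 'a \<Rightarrow> nat \<Rightarrow> real \<Rightarrow> nat \<Rightarrow> nat \<Rightarrow> nat \<Rightarrow> bool" where
  "diag_run f x n eps i j m \<longleftrightarrow> (\<forall>k<m. rplot f x n eps (i + k) (j + k))"

lemma bowen_dist_orbit_le_iff_diag_run: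
  assumes "0 < l" "i + l \<le> n" "j + l \<le> n"
  shows "bowen_dist f l ((f ^^ i) x) ((f ^^ j) x) \<le> eps \<longleftrightarrow> diag_run f x n eps i j l"
proof -
  have orbit: "(f ^^ (i + k)) x = (f ^^ k) ((f ^^ i) x)" for i k
    by (metis add.commute comp_apply funpow_add)
  show ?thesis using assms by (auto simp: bowen_dist_le_iff diag_run_def rplot_def orbit)
qed

lemma diag_run_bound:
  assumes "diag_run f x n eps i j m" "0 < m"
  shows "i + m \<le> n" "j + m \<le> n"
proof -
  have "rplot f x n eps (i + (m - 1)) (j + (m - 1))"
    using assms unfolding diag_run_def by (metis diff_less zero_less_one)
  then show "i + m \<le> n" "j + m \<le> n" using assms(2) unfolding rplot_def by auto
qed

lemma diag_run_extend_backward: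
  assumes "diag_run f x n eps i j m"
  shows "\<exists>t i0 j0. i = i0 + t \<and> j = j0 + t \<and> diag_run f x n eps i0 j0 (t + m) \<and>
           (0 < min i0 j0 \<longrightarrow> \<not> rplot f x n eps (i0 - 1) (j0 - 1))"
  using assms
proof (induction i arbitrary: j m)
  case 0
  then show ?case by (intro exI[of _ 0] exI[of _ 0] exI[of _ j]) simp
next
  case (Suc i)
  show ?case
  proof (cases "0 < j \<and> rplot f x n eps i (j - 1)")
    case True
    have "diag_run f x n eps i (j - 1) (Suc m)"
      using True Suc.prems unfolding diag_run_def
      by (auto simp: less_Suc_eq_0_disj Suc_diff_Suc)
    then obtain t i0 j0 where "i = i0 + t" "j - 1 = j0 + t" "diag_run f x n eps i0 j0 (t + Suc m)"
        "0 < min i0 j0 \<longrightarrow> \<not> rplot f x n eps (i0 - 1) (j0 - 1)"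
      using Suc.IH by metis
    with True show ?thesis by (intro exI[of _ "Suc t"] exI[of _ i0] exI[of _ j0]) auto
  next
    case False
    with Suc.prems show ?thesis by (intro exI[of _ 0] exI[of _ "Suc i"] exI[of _ j]) auto
  qed
qed

lemma diag_run_extend_forward:
  assumes "diag_run f x n eps i j m" "0 < m" "i \<noteq> j"
    and "0 < min i j \<longrightarrow> \<not> rplot f x n eps (i - 1) (j - 1)"
  shows "\<exists>L\<ge>m. is_line f x n eps i j L"
  using assms(1,2)
proof (induction "n - m" arbitrary: m rule: less_induct)
  case less
  have bound: "i + m \<le> n" "j + m \<le> n" using diag_run_bound[OF less.prems] by auto
  show ?case
  proof (cases "max i j < n - m \<and> rplot f x n eps (i + m) (j + m)")
    case True
    then have "diag_run f x n eps i j (Suc m)"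
      using less.prems(1) unfolding diag_run_def by (auto simp: less_Suc_eq)
    moreover have "n - Suc m < n - m" using True by auto
    ultimately obtain L where "L \<ge> Suc m" "is_line f x n eps i j L" using less.hyps by blast
    then show ?thesis by (intro exI[of _ L]) simp
  next
    case False
    then have "is_line f x n eps i j m"
      using less.prems(1) bound assms(3,4) unfolding is_line_def diag_run_def by auto
    then show ?thesis by blast
  qed
qed

lemma diag_run_in_line:
  assumes "diag_run f x n eps i j m" "0 < m" "i \<noteq> j"
  shows "\<exists>i0 j0 L t. is_line f x n eps i0 j0 L \<and> i = i0 + t \<and> j = j0 + t \<and> t + m \<le> L"
proof -
  obtain t i0 j0 where shift: "i = i0 + t" "j = j0 + t"
    and run: "diag_run f x n eps i0 j0 (t + m)"
    and start: "0 < min i0 j0 \<longrightarrow> \<not> rplot f x n eps (i0 - 1) (j0 - 1)"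
    using diag_run_extend_backward[OF assms(1)] by metis
  have "i0 \<noteq> j0" using shift assms(3) by auto
  then obtain L where "L \<ge> t + m" "is_line f x n eps i0 j0 L"
    using diag_run_extend_forward[OF run _ _ start] assms(2) by auto
  with shift show ?thesis by blast
qed

lemma line_start_le:
  assumes "is_line f x n eps i j L" "is_line f x n eps i' j' L'"
    and "i + t = i' + t'" "j + t = j' + t'" "t < L"
  shows "i' \<le> i"
proof (rule ccontr)
  assume "\<not> i' \<le> i"
  \<comment> \<open>then the cell just before the start of the second line lies on the first line\<close>
  then have "0 < min i' j'" "i + (i' - 1 - i) = i' - 1" "j + (i' - 1 - i) = j' - 1" "i' - 1 - i < L"
    using assms(3-5) by auto
  moreover have "\<forall>k<L. rplot f x n eps (i + k) (j + k)" "0 < min i' j' \<longrightarrow> \<not> rplot f x n eps (i' - 1) (j' - 1)"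
    using assms(1,2) unfolding is_line_def by auto
  ultimately show False by metis
qed

lemma line_length_unique:
  assumes "is_line f x n eps i j L" "is_line f x n eps i j L'"
  shows "L = L'"
proof -
  have longer: False if "is_line f x n eps i j M" "is_line f x n eps i j M'" "M < M'" for M M'
  proof -
    have "max i j < n - M" using that unfolding is_line_def by auto
    then show False using that unfolding is_line_def by auto
  qed
  show ?thesis using longer[OF assms] longer[OF assms(2,1)] by (meson linorder_neqE_nat)
qed

lemma line_through_point_unique:
  assumes "is_line f x n eps i j L" "is_line f x n eps i' j' L'"
    and "i + t = i' + t'" "j + t = j' + t'" "t < L" "t' < L'"
  shows "i = i' \<and> j = j' \<and> L = L' \<and> t = t'"
proof -
  have "i = i'"
    using line_start_le[OF assms(1-5)] line_start_le[OF assms(2,1) assms(3,4)[symmetric] assms(6)]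
    by simp
  moreover from this have "t = t'" "j = j'" using assms(3,4) by auto
  ultimately show ?thesis using line_length_unique assms(1,2) by metis
qed

definition run_starts :: "('a::metric_space \<Rightarrow> 'a) \<Rightarrow> 'a \<Rightarrow> nat \<Rightarrow> real \<Rightarrow> nat \<Rightarrow> (nat \<times> nat) set" where
  "run_starts f x n eps l =
     {(i, j). i \<noteq> j \<and> i + l \<le> n \<and> j + l \<le> n \<and> diag_run f x n eps i j l}"

lemma line_sub_run:
  assumes "is_line f x n eps i j L" "t + l \<le> L"
  shows "(i + t, j + t) \<in> run_starts f x n eps l"
  using assms unfolding is_line_def run_starts_def diag_run_def
  by (auto simp: add.assoc)

lemma run_start_in_line:
  assumes "(a, b) \<in> run_starts f x n eps l" "0 < l"
  shows "\<exists>L i j t. l \<le> L \<and> L \<le> n \<and> is_line f x n eps i j L \<and> t \<le> L - l \<and> (a, b) = (i + t, j + t)"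
proof -
  obtain i j L t where "is_line f x n eps i j L" "a = i + t" "b = j + t" "t + l \<le> L"
    using assms diag_run_in_line[of f x n eps a b l] unfolding run_starts_def by auto
  moreover from this have "L \<le> n" unfolding is_line_def by simp
  ultimately show ?thesis by (intro exI[of _ L] exI[of _ i] exI[of _ j] exI[of _ t]) auto
qed

lemma card_run_starts:
  assumes "0 < l"
  shows "card (run_starts f x n eps l) = (\<Sum>L\<in>{l..n}. (L + 1 - l) * num_lines f x n eps L)"
proof -
  let ?lines = "\<lambda>L. {(i, j). is_line f x n eps i j L}"
  define T where "T = (SIGMA L:{l..n}. ?lines L \<times> {..L - l})"
  have finite_lines: "finite (?lines L)" for L
    by (rule finite_subset[of _ "{..n} \<times> {..n}"]) (auto simp: is_line_def)
  have "bij_betw (\<lambda>(L, (i, j), t). (i + t, j + t)) T (run_starts f x n eps l)"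
  proof (rule bij_betw_imageI)
    show "inj_on (\<lambda>(L, (i, j), t). (i + t, j + t)) T"
    proof (rule inj_onI, clarsimp simp: T_def)
      fix L i j t L' i' j' t'
      assume "is_line f x n eps i j L" "is_line f x n eps i' j' L'"
        "i + t = i' + t'" "j + t = j' + t'" "t \<le> L - l" "l \<le> L" "t' \<le> L' - l" "l \<le> L'"
      with assms show "L = L' \<and> i = i' \<and> j = j' \<and> t = t'"
        using line_through_point_unique[of f x n eps i j L i' j' L' t t'] by auto
    qed
    show "(\<lambda>(L, (i, j), t). (i + t, j + t)) ` T = run_starts f x n eps l"
    proof
      show "(\<lambda>(L, (i, j), t). (i + t, j + t)) ` T \<subseteq> run_starts f x n eps l"
        using line_sub_run unfolding T_def by fastforce
      show "run_starts f x n eps l \<subseteq> (\<lambda>(L, (i, j), t). (i + t, j + t)) ` T"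
      proof (clarify)
        fix a b assume "(a, b) \<in> run_starts f x n eps l"
        then obtain L i j t where "l \<le> L" "L \<le> n" "is_line f x n eps i j L" "t \<le> L - l"
            "(a, b) = (i + t, j + t)"
          using run_start_in_line[OF _ assms] by metis
        then show "(a, b) \<in> (\<lambda>(L, (i, j), t). (i + t, j + t)) ` T"
          unfolding T_def by (intro image_eqI[of _ _ "(L, (i, j), t)"]) auto
      qed
    qed
  qed
  then have "card (run_starts f x n eps l) = card T" by (simp add: bij_betw_same_card)
  also have "\<dots> = (\<Sum>L\<in>{l..n}. (L + 1 - l) * num_lines f x n eps L)"
    unfolding T_def num_lines_def
    by (subst card_SigmaI) (auto simp: finite_lines card_cartesian_product Suc_diff_le intro!: sum.cong)
  finally show ?thesis .
qed

definition corr_pairs :: "('a::metric_space \<Rightarrow> 'a) \<Rightarrow> nat \<Rightarrow> 'a \<Rightarrow> nat \<Rightarrow> real \<Rightarrow> (nat \<times> nat) set" where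
  "corr_pairs f l x n eps =
     {(i, j). i < n \<and> j < n \<and> bowen_dist f l ((f ^^ i) x) ((f ^^ j) x) \<le> eps}"

definition boundary_pairs :: "nat \<Rightarrow> nat \<Rightarrow> (nat \<times> nat) set" where
  "boundary_pairs n l = {(i, j). i < n \<and> j < n \<and> i \<noteq> j \<and> \<not> (i + l \<le> n \<and> j + l \<le> n)}"

lemma finite_boundary_pairs: "finite (boundary_pairs n l)"
  by (rule finite_subset[of _ "{..<n} \<times> {..<n}"]) (auto simp: boundary_pairs_def)

lemma card_boundary_pairs_le: "card (boundary_pairs n l) \<le> 2 * (l - 1) * n"
proof -
  define top where "top = {i. i < n \<and> n < i + l}"
  have card_top: "card top \<le> l - 1"
  proof -
    have "top \<subseteq> {n - (l - 1)..<n}" unfolding top_def by auto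
    then have "card top \<le> card {n - (l - 1)..<n}" by (intro card_mono) auto
    then show ?thesis by simp
  qed
  have "boundary_pairs n l \<subseteq> top \<times> {..<n} \<union> {..<n} \<times> top"
    unfolding boundary_pairs_def top_def by auto
  then have "card (boundary_pairs n l) \<le> card (top \<times> {..<n} \<union> {..<n} \<times> top)"
    by (intro card_mono) (auto simp: top_def)
  also have "\<dots> \<le> card (top \<times> {..<n}) + card ({..<n} \<times> top)"
    by (rule card_Un_le)
  also have "\<dots> \<le> (l - 1) * n + n * (l - 1)"
    using card_top by (simp add: card_cartesian_product add_mono)
  finally show ?thesis by (simp add: algebra_simps)
qed

lemma corr_pairs_decompose:
  assumes "0 < l" "0 \<le> eps"
  shows "corr_pairs f l x n eps
    = (\<lambda>i. (i, i)) ` {..<n} \<union> run_starts f x n eps l \<union> (corr_pairs f l x n eps \<inter> boundary_pairs n l)"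
proof -
  have "bowen_dist f l y y \<le> eps" for y
    using assms by (simp add: bowen_dist_le_iff)
  moreover have "(i, j) \<in> (\<lambda>i. (i, i)) ` {..<n} \<longleftrightarrow> i < n \<and> i = j" for i j
    by auto
  ultimately show ?thesis
    using assms(1) unfolding boundary_pairs_def
    by (auto simp: corr_pairs_def run_starts_def bowen_dist_orbit_le_iff_diag_run[OF assms(1)])
qed

lemma card_corr_pairs:
  assumes "0 < l" "0 \<le> eps"
  shows "card (corr_pairs f l x n eps)
    = n + card (run_starts f x n eps l) + card (corr_pairs f l x n eps \<inter> boundary_pairs n l)"
proof -
  let ?D = "(\<lambda>i. (i, i)) ` {..<n}" and ?S = "run_starts f x n eps l"
    and ?R = "corr_pairs f l x n eps \<inter> boundary_pairs n l"
  have finite_R: "finite ?R" by (simp add: finite_boundary_pairs)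
  have finite_S: "finite ?S"
    by (rule finite_subset[of _ "{..n} \<times> {..n}"]) (auto simp: run_starts_def)
  have "?D \<inter> ?S = {}" "(?D \<union> ?S) \<inter> ?R = {}"
    by (auto simp: run_starts_def boundary_pairs_def)
  then have "card (?D \<union> ?S \<union> ?R) = card ?D + card ?S + card ?R"
    using finite_R finite_S by (simp add: card_Un_disjoint)
  moreover have "card ?D = n" by (simp add: card_image inj_on_def)
  ultimately show ?thesis using corr_pairs_decompose[OF assms, of f x n] by simp
qed

lemma RR_sum_minus_Lambda_sum:
  assumes "0 < l"
  shows "RR_sum f x n eps l - (real l - 1) * Lambda_sum f x n eps l
       = real (card (run_starts f x n eps l)) / ((real n)^2 - real n)"
proof -
  have "RR_sum f x n eps l - (real l - 1) * Lambda_sum f x n eps l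
      = (\<Sum>L\<in>{l..n}. (real L - (real l - 1)) * line_freq f x n eps L)"
    unfolding RR_sum_def Lambda_sum_def
    by (simp add: sum_distrib_left sum_subtractf left_diff_distrib)
  also have "\<dots> = (\<Sum>L\<in>{l..n}. real ((L + 1 - l) * num_lines f x n eps L)) / ((real n)^2 - real n)"
    unfolding sum_divide_distrib line_freq_def
    by (rule sum.cong) (use assms in \<open>auto simp: of_nat_diff\<close>)
  also have "\<dots> = real (card (run_starts f x n eps l)) / ((real n)^2 - real n)"
    by (simp add: card_run_starts[OF assms])
  finally show ?thesis .
qed

theorem mainTheorem9:
  fixes f :: "'a::metric_space \<Rightarrow> 'a" and x :: 'a and l n :: nat and eps :: real
  assumes "continuous_on UNIV f"
    and "l \<ge> 1"
    and "n \<ge> 2"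
    and "eps > 0"
  shows "\<exists>\<delta>::real.
           corr_sum f l x n eps
             = (real n - 1) / real n * (RR_sum f x n eps l - (real l - 1) * Lambda_sum f x n eps l) + \<delta>
           \<and> 1 / real n \<le> \<delta> \<and> \<delta> < 2 * real l / real n"
proof -
  have l: "0 < l" and eps: "0 \<le> eps" and n: "2 \<le> real n" using assms by auto
  define S where "S = real (card (run_starts f x n eps l))"
  define R where "R = real (card (corr_pairs f l x n eps \<inter> boundary_pairs n l))"
  have "card (corr_pairs f l x n eps \<inter> boundary_pairs n l) \<le> 2 * (l - 1) * n"
    using card_mono[OF finite_boundary_pairs inf_le2] card_boundary_pairs_le le_trans by blast
  then have R: "0 \<le> R" "R \<le> 2 * (real l - 1) * real n"
    using l unfolding R_def by (auto simp: of_nat_diff dest: of_nat_mono[where 'a=real])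
  have corr: "corr_sum f l x n eps = (real n + S + R) / (real n)^2"
    unfolding S_def R_def corr_sum_def corr_pairs_def[symmetric] card_corr_pairs[OF l eps] by simp
  have RR: "RR_sum f x n eps l - (real l - 1) * Lambda_sum f x n eps l = S / ((real n)^2 - real n)"
    unfolding S_def by (rule RR_sum_minus_Lambda_sum[OF l])
  show ?thesis unfolding corr RR
  proof (intro exI[of _ "(real n + R) / (real n)^2"] conjI)
    show "(real n + S + R) / (real n)^2 = (real n - 1) / real n * (S / ((real n)^2 - real n)) + (real n + R) / (real n)^2"
      using n by (simp add: field_simps power2_eq_square)
    show "1 / real n \<le> (real n + R) / (real n)^2"
      using n R by (simp add: field_simps power2_eq_square)
    have "real n + R < 2 * real l * real n" using n R by (simp add: algebra_simps)
    then have "(real n + R) * real n < 2 * real l * real n * real n"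
      using n by (intro mult_strict_right_mono) auto
    then show "(real n + R) / (real n)^2 < 2 * real l / real n"
      using n by (simp add: field_simps power2_eq_square)
  qed
qed

end
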